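(* Let $G=G_{p_1}\oplus\cdots\oplus G_{p_m}$ be a finite abelian group, with $p_1,\dots,p_m$ distinct primes and each $G_{p_j}=\mathbb{Z}_{p_j^{r_{j,1}}}^{k_{j,1}}\oplus\cdots\oplus\mathbb{Z}_{p_j^{r_{j,s_j}}}^{k_{j,s_j}}$ with $1\le r_{j,1}<\cdots<r_{j,s_j}$ and all $k_{j,i}\ge1$. Then the number of orbits of $\mathrm{Aut}(G)$ acting on the elements of $G$ equals the product over $j=1,\dots,m$ of the number of orbits of $\mathrm{Aut}(G_{p_j}^{rf})$ on $G_{p_j}^{rf}=\mathbb{Z}_{p_j^{r_{j,1}}}\oplus\cdots\oplus\mathbb{Z}_{p_j^{r_{j,s_j}}}$; that is, it equals $$\prod_{j=1}^m (r_{j,1}+1)\prod_{i=1}^{s_j-1}\bigl(r_{j,i+1}-r_{j,i}+1\bigr).$$ *)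

theory Defs
  imports "HOL-Algebra.Product_Groups" "HOL-Computational_Algebra.Primes"
begin

definition aut_orbit :: "('a, 'b) monoid_scheme \<Rightarrow> 'a \<Rightarrow> 'a set" where
  "aut_orbit G x = {\<phi> x | \<phi>. \<phi> \<in> iso G G}"

definition num_aut_orbits :: "('a, 'b) monoid_scheme \<Rightarrow> nat" where
  "num_aut_orbits G = card (aut_orbit G ` carrier G)"

definition reduced_group :: "nat \<Rightarrow> nat \<Rightarrow> (nat \<Rightarrow> nat) \<Rightarrow> (nat \<Rightarrow> int) monoid" where
  "reduced_group p s r = product_group {..<s} (\<lambda>i. integer_mod_group (p ^ r i))"

definition whole_group :: "nat \<Rightarrow> (nat \<Rightarrow> nat) \<Rightarrow> (nat \<Rightarrow> nat) \<Rightarrow> (nat \<Rightarrow> nat \<Rightarrow> nat)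
    \<Rightarrow> (nat \<Rightarrow> nat \<Rightarrow> nat) \<Rightarrow> (nat \<times> nat \<times> nat \<Rightarrow> int) monoid" where
  "whole_group m p s r k =
     product_group {(j, i, l). j < m \<and> i < s j \<and> l < k j i}
       (\<lambda>(j, i, l). integer_mod_group (p j ^ r j i))"

end

theory Submission
  imports Defs
begin

(*
  Write G as the direct sum of cyclic groups Z/(q t)^(e t), t in I, with primes q t
  that may repeat (locale prime_power_product).  Call a "height profile" on a finite
  set R of exponents a function b with b x <= x such that both b x and x - b x are
  monotone in x (height_profiles).

  1. Reduction: unit scalings and transvections (add h times one coordinate to another)
     are automorphisms; with them every element is moved to the canonical element of a
     profile, i.e. of a choice of height profile on the exponents of each prime
     (orbit_meets_canonical).
  2. Separation: the set of pairs (u, w) for which x^w is a u-th power is an orbit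
     invariant (power_pattern) that tells canonical elements apart
     (canonical_orbit_inj).
  Hence the number of orbits is the product over the primes p of the number of height
  profiles on the exponents occurring with p (num_aut_orbits_G).
  3. Counting: for exponents r 0 < ... < r n there are
     (r 0 + 1) * prod_i (r (i+1) - r i + 1) height profiles (card_height_profiles_image).
  The theorem follows: in the whole group the prime p j occurs with exactly the
  exponents r j i, as in the reduced group, whatever the multiplicities k j i are.
*)

section \<open>Orbits of the automorphism group\<close>

lemma aut_orbit_self: "x \<in> aut_orbit G x"
  unfolding aut_orbit_def using iso_set_refl by fastforce

lemma iso_in_aut_orbit: "\<phi> \<in> iso G G \<Longrightarrow> \<phi> x \<in> aut_orbit G x"
  unfolding aut_orbit_def by blast

lemma aut_orbit_eq:
  assumes G: "group G" and x: "x \<in> carrier G" and y: "y \<in> aut_orbit G x"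
  shows "aut_orbit G y = aut_orbit G x"
proof -
  obtain \<phi> where \<phi>: "\<phi> \<in> iso G G" and y_def: "y = \<phi> x"
    using y unfolding aut_orbit_def by blast
  have \<phi>_inv: "inv_into (carrier G) \<phi> \<in> iso G G"
    using group.iso_set_sym[OF G \<phi>] .
  have "inj_on \<phi> (carrier G)" using \<phi> by (simp add: iso_iff)
  then have x_eq: "x = inv_into (carrier G) \<phi> y" using y_def inv_into_f_f x by metis
  have "aut_orbit G y \<subseteq> aut_orbit G x"
  proof
    fix z assume "z \<in> aut_orbit G y"
    then obtain \<psi> where "\<psi> \<in> iso G G" "z = \<psi> y" unfolding aut_orbit_def by blast
    then have "\<psi> \<circ> \<phi> \<in> iso G G" "z = (\<psi> \<circ> \<phi>) x" using \<phi> iso_set_trans y_def by auto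
    then show "z \<in> aut_orbit G x" unfolding aut_orbit_def by blast
  qed
  moreover have "aut_orbit G x \<subseteq> aut_orbit G y"
  proof
    fix z assume "z \<in> aut_orbit G x"
    then obtain \<psi> where "\<psi> \<in> iso G G" "z = \<psi> x" unfolding aut_orbit_def by blast
    then have "\<psi> \<circ> inv_into (carrier G) \<phi> \<in> iso G G" "z = (\<psi> \<circ> inv_into (carrier G) \<phi>) y"
      using \<phi>_inv iso_set_trans x_eq by auto
    then show "z \<in> aut_orbit G y" unfolding aut_orbit_def by blast
  qed
  ultimately show ?thesis by blast
qed

lemma aut_orbit_trans:
  assumes "group G" "x \<in> carrier G" "y \<in> aut_orbit G x" "z \<in> aut_orbit G y"
  shows "z \<in> aut_orbit G x"
  using aut_orbit_eq[OF assms(1-3)] assms(4) by simp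

text \<open>
  It is
  preserved by automorphisms, hence constant on orbits; it is the invariant used to
  separate the orbits of distinct canonical elements.
\<close>

definition power_pattern :: "('a, 'b) monoid_scheme \<Rightarrow> 'a \<Rightarrow> (nat \<times> nat) set" where
  "power_pattern G x = {(u, w). \<exists>y\<in>carrier G. y [^]\<^bsub>G\<^esub> u = x [^]\<^bsub>G\<^esub> w}"

lemma power_pattern_iso:
  assumes G: "group G" and x: "x \<in> carrier G" and \<phi>: "\<phi> \<in> iso G G"
  shows "power_pattern G (\<phi> x) = power_pattern G x"
proof -
  have hom: "\<phi> \<in> hom G G" and inj: "inj_on \<phi> (carrier G)" and surj: "\<phi> ` carrier G = carrier G"
    using \<phi> by (auto simp: iso_iff)
  have \<phi>_pow: "\<phi> (z [^]\<^bsub>G\<^esub> (i::nat)) = \<phi> z [^]\<^bsub>G\<^esub> i" if "z \<in> carrier G" for z i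
    using hom_nat_pow[OF hom that G G] .
  have pow_closed: "z [^]\<^bsub>G\<^esub> (i::nat) \<in> carrier G" if "z \<in> carrier G" for z i
    using that G by (simp add: group.is_monoid monoid.nat_pow_closed)
  have "(\<exists>y\<in>carrier G. y [^]\<^bsub>G\<^esub> u = \<phi> x [^]\<^bsub>G\<^esub> w)
      \<longleftrightarrow> (\<exists>y\<in>carrier G. y [^]\<^bsub>G\<^esub> u = x [^]\<^bsub>G\<^esub> w)" for u w :: nat
  proof
    assume "\<exists>y\<in>carrier G. y [^]\<^bsub>G\<^esub> u = \<phi> x [^]\<^bsub>G\<^esub> w"
    then obtain y where y: "y \<in> carrier G" "\<phi> y [^]\<^bsub>G\<^esub> u = \<phi> x [^]\<^bsub>G\<^esub> w"
      using surj by (metis imageE)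
    then have "\<phi> (y [^]\<^bsub>G\<^esub> u) = \<phi> (x [^]\<^bsub>G\<^esub> w)" using \<phi>_pow x by simp
    then have "y [^]\<^bsub>G\<^esub> u = x [^]\<^bsub>G\<^esub> w"
      using inj_onD[OF inj] pow_closed x y(1) by blast
    then show "\<exists>y\<in>carrier G. y [^]\<^bsub>G\<^esub> u = x [^]\<^bsub>G\<^esub> w" using y(1) by blast
  next
    assume "\<exists>y\<in>carrier G. y [^]\<^bsub>G\<^esub> u = x [^]\<^bsub>G\<^esub> w"
    then obtain y where "y \<in> carrier G" "y [^]\<^bsub>G\<^esub> u = x [^]\<^bsub>G\<^esub> w" by blast
    then show "\<exists>y\<in>carrier G. y [^]\<^bsub>G\<^esub> u = \<phi> x [^]\<^bsub>G\<^esub> w"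
      using \<phi>_pow x hom_in_carrier[OF hom] by metis
  qed
  then show ?thesis unfolding power_pattern_def by simp
qed

lemma power_pattern_orbit:
  assumes "group G" "x \<in> carrier G" "y \<in> aut_orbit G x"
  shows "power_pattern G y = power_pattern G x"
  using assms(3) power_pattern_iso[OF assms(1,2)] unfolding aut_orbit_def by blast

section \<open>Height profiles\<close>

text \<open>
  Such profiles parametrise the automorphism orbits of the direct sum of the
  groups \<open>\<int>/p\<^sup>x\<close>, \<open>x \<in> R\<close>.
\<close>

definition height_profiles :: "nat set \<Rightarrow> (nat \<Rightarrow> nat) set" where
  "height_profiles R = {b \<in> R \<rightarrow>\<^sub>E UNIV. (\<forall>x\<in>R. b x \<le> x) \<and>
     (\<forall>x\<in>R. \<forall>y\<in>R. x < y \<longrightarrow> b x \<le> b y \<and> x - b x \<le> y - b y)}"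

lemma finite_height_profiles:
  assumes "finite R" shows "finite (height_profiles R)"
proof (rule finite_subset)
  show "height_profiles R \<subseteq> (\<Pi>\<^sub>E x\<in>R. {..x})" unfolding height_profiles_def by auto
  show "finite (\<Pi>\<^sub>E x\<in>R. {..x})" using assms by (simp add: finite_PiE)
qed

lemma card_height_profiles_singleton: "card (height_profiles {x}) = x + 1"
proof -
  have "bij_betw (\<lambda>b. b x) (height_profiles {x}) {..x}"
    by (rule bij_betw_byWitness[where f' = "\<lambda>h. \<lambda>_\<in>{x}. h"])
       (auto simp: height_profiles_def PiE_def extensional_def)
  then show ?thesis by (simp add: bij_betw_same_card)
qed

text \<open>
  Adding an exponent \<open>x\<close> above all of \<open>R\<close>: only the constraints against \<open>M = Max R\<close>
  bind, so the new height ranges over \<open>b M .. b M + (x - M)\<close>.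
\<close>

lemma card_height_profiles_insert:
  assumes R: "finite R" "R \<noteq> {}" and above: "\<And>y. y \<in> R \<Longrightarrow> y < x"
  shows "card (height_profiles (insert x R)) = card (height_profiles R) * (x - Max R + 1)"
proof -
  define M where "M = Max R"
  have M: "M \<in> R" "\<And>y. y \<in> R \<Longrightarrow> y \<le> M" using R unfolding M_def by auto
  have xR: "x \<notin> R" using above by blast
  define B where "B = (\<lambda>b::nat \<Rightarrow> nat. {b M .. b M + (x - M)})"
  have below_M: "b y \<le> b M \<and> y - b y \<le> M - b M" if "b \<in> height_profiles R" "y \<in> R" for b y
  proof (cases "y = M")
    case False
    then have "y < M" using M(2)[OF that(2)] by simp
    then show ?thesis using that M(1) unfolding height_profiles_def by blast
  qed simp
  have "bij_betw (\<lambda>b. (restrict b R, b x)) (height_profiles (insert x R)) (Sigma (height_profiles R) B)"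
  proof (rule bij_betw_byWitness[where f' = "\<lambda>(b, h). (restrict b R)(x := h)"])
    show "\<forall>b\<in>height_profiles (insert x R). (\<lambda>(b, h). (restrict b R)(x := h)) (restrict b R, b x) = b"
      by (auto simp: height_profiles_def PiE_def extensional_def fun_eq_iff)
    show "\<forall>p\<in>Sigma (height_profiles R) B. (\<lambda>b. (restrict b R, b x)) ((\<lambda>(b, h). (restrict b R)(x := h)) p) = p"
      using xR by (auto simp: height_profiles_def PiE_def extensional_def fun_eq_iff)
    show "(\<lambda>b. (restrict b R, b x)) ` height_profiles (insert x R) \<subseteq> Sigma (height_profiles R) B"
    proof (rule image_subsetI)
      fix b assume b: "b \<in> height_profiles (insert x R)"
      have "restrict b R \<in> height_profiles R" using b by (auto simp: height_profiles_def)
      moreover have "b M \<le> b x" "M - b M \<le> x - b x" "b M \<le> M" "b x \<le> x"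
        using b M above[OF M(1)] unfolding height_profiles_def by auto
      ultimately show "(restrict b R, b x) \<in> Sigma (height_profiles R) B"
        using M(1) unfolding B_def by auto
    qed
    show "(\<lambda>(b, h). (restrict b R)(x := h)) ` Sigma (height_profiles R) B \<subseteq> height_profiles (insert x R)"
    proof (rule image_subsetI)
      fix p assume "p \<in> Sigma (height_profiles R) B"
      then obtain b h where p: "p = (b, h)" and b: "b \<in> height_profiles R" and h: "h \<in> B b"
        by blast
      have "b M \<le> M" using b M(1) unfolding height_profiles_def by auto
      then have below: "b y \<le> h \<and> y - b y \<le> x - h \<and> h \<le> x" if "y \<in> R" for y
        using below_M[OF b that] h above[OF M(1)] unfolding B_def by auto
      then show "(\<lambda>(b, h). (restrict b R)(x := h)) p \<in> height_profiles (insert x R)"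
        using p b xR below[OF M(1)] unfolding height_profiles_def
        by (auto simp: PiE_def extensional_def dest: above)
    qed
  qed
  then have "card (height_profiles (insert x R)) = card (Sigma (height_profiles R) B)"
    by (rule bij_betw_same_card)
  also have "\<dots> = (\<Sum>b\<in>height_profiles R. card (B b))"
    by (rule card_SigmaI) (auto simp: finite_height_profiles R B_def)
  also have "\<dots> = card (height_profiles R) * (x - M + 1)" by (simp add: B_def)
  finally show ?thesis unfolding M_def .
qed

text \<open>
  If a height profile exceeds \<open>h\<close> at \<open>x\<close>, then shifting it by \<open>x - h - 1\<close> lifts it to at
  least \<open>x\<close> wherever the shifted value stays below \<open>y\<close>; this is what makes the root
  witness below well defined.
\<close>

lemma height_profile_above:
  assumes b: "b \<in> height_profiles R" and x: "x \<in> R" and y: "y \<in> R"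
    and h: "h < b x" and below: "x - h - 1 + b y < y"
  shows "x \<le> x - h - 1 + b y"
proof -
  have bounds: "b x \<le> x" "b y \<le> y" using b x y unfolding height_profiles_def by auto
  consider "y = x" | "x < y" | "y < x" by linarith
  then show ?thesis
  proof cases
    case 2
    then have "b x \<le> b y" using b x y unfolding height_profiles_def by blast
    then show ?thesis using h by linarith
  next
    case 3
    then have "y - b y \<le> x - b x" using b x y unfolding height_profiles_def by blast
    then show ?thesis using below bounds h by linarith
  qed (use h in simp)
qed

lemma consecutive_less_imp_less:
  fixes r :: "nat \<Rightarrow> nat"
  assumes "\<And>i. i + 1 < n \<Longrightarrow> r i < r (i + 1)" "i < i'" "i' < n"
  shows "r i < r i'"
  using assms(2,3)
proof (induction i')
  case (Suc i')
  then show ?case using assms(1)[of i'] by (cases "i = i'") auto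
qed simp

lemma card_height_profiles_image:
  fixes r :: "nat \<Rightarrow> nat"
  assumes "\<And>i. i < n \<Longrightarrow> r i < r (i + 1)"
  shows "card (height_profiles (r ` {..<Suc n})) = (r 0 + 1) * (\<Prod>i<n. r (i + 1) - r i + 1)"
  using assms
proof (induction n)
  case 0
  then show ?case by (simp add: lessThan_Suc card_height_profiles_singleton)
next
  case (Suc n)
  have less: "r i < r i'" if "i < i'" "i' < Suc (Suc n)" for i i'
    by (rule consecutive_less_imp_less[of "Suc (Suc n)" r]) (use Suc.prems that in auto)
  have max: "Max (r ` {..<Suc n}) = r n"
  proof (rule Max_eqI)
    fix y assume "y \<in> r ` {..<Suc n}"
    then obtain i where i: "i < Suc n" "y = r i" by blast
    show "y \<le> r n"
    proof (cases "i = n")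
      case False
      then have "r i < r n" using i(1) by (intro less) auto
      then show ?thesis using i(2) by simp
    qed (use i in simp)
  qed auto
  have "card (height_profiles (r ` {..<Suc (Suc n)}))
      = card (height_profiles (r ` {..<Suc n})) * (r (Suc n) - r n + 1)"
    unfolding lessThan_Suc[of "Suc n"] image_insert max[symmetric]
    using less by (intro card_height_profiles_insert) auto
  also have "\<dots> = (r 0 + 1) * (\<Prod>i<n. r (i + 1) - r i + 1) * (r (n + 1) - r n + 1)"
    using Suc by simp
  also have "\<dots> = (r 0 + 1) * (\<Prod>i<Suc n. r (i + 1) - r i + 1)"
    by (simp only: prod.lessThan_Suc mult.assoc)
  finally show ?case .
qed

section \<open>Products of cyclic groups of prime-power order\<close>

text \<open>
  If \<open>n' dvd h * n\<close>, multiplication by \<open>h\<close> is a well-defined map \<open>\<int>/n \<rightarrow> \<int>/n'\<close>, so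
  \<open>a + h b (mod n')\<close> does not depend on the representative of \<open>b mod n\<close>.
\<close>

lemma mod_add_mult_dvd:
  fixes a b h n n' :: int
  assumes "n' dvd h * n"
  shows "(a mod n' + h * (b mod n)) mod n' = (a + h * b) mod n'"
proof -
  obtain c where c: "h * n = n' * c" using assms by blast
  define d m where "d = b div n" and "m = b mod n"
  have "h * b = h * (d * n + m)" unfolding d_def m_def by simp
  also have "\<dots> = h * m + (h * n) * d" by (simp add: algebra_simps)
  also have "\<dots> = h * m + n' * (c * d)" using c by simp
  finally have "(h * (b mod n)) mod n' = (h * b) mod n'" unfolding m_def by simp
  have "(a mod n' + h * (b mod n)) mod n' = (a + (h * (b mod n)) mod n') mod n'"
    by (simp add: mod_add_left_eq mod_add_right_eq)
  also have "\<dots> = (a + (h * b) mod n') mod n'" using \<open>(h * (b mod n)) mod n' = (h * b) mod n'\<close> by simp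
  also have "\<dots> = (a + h * b) mod n'" by (simp add: mod_add_right_eq)
  finally show ?thesis .
qed

locale prime_power_product =
  fixes I :: "'a set" and q :: "'a \<Rightarrow> nat" and e :: "'a \<Rightarrow> nat"
  assumes finite_I: "finite I" and prime_q: "\<And>t. t \<in> I \<Longrightarrow> prime (q t)"
begin

definition modulus :: "'a \<Rightarrow> int" where "modulus t = int (q t) ^ e t"

definition G :: "('a \<Rightarrow> int) monoid" where
  "G = product_group I (\<lambda>t. integer_mod_group (q t ^ e t))"

lemma modulus_pos: "t \<in> I \<Longrightarrow> modulus t > 0"
  using prime_q[of t] prime_gt_0_nat unfolding modulus_def by simp

lemma carrier_G: "carrier G = (\<Pi>\<^sub>E t\<in>I. {0..<modulus t})"
proof -
  have "carrier (integer_mod_group (q t ^ e t)) = {0..<modulus t}" if "t \<in> I" for t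
    using prime_gt_0_nat[OF prime_q[OF that]]
    by (simp add: carrier_integer_mod_group modulus_def)
  then show ?thesis unfolding G_def by (auto simp: PiE_iff)
qed

lemma mult_G: "x \<otimes>\<^bsub>G\<^esub> y = (\<lambda>t\<in>I. (x t + y t) mod modulus t)"
  by (simp add: G_def modulus_def)

lemma group_G: "group G"
  unfolding G_def by (rule product_group) simp

lemma finite_carrier_G: "finite (carrier G)"
  unfolding carrier_G using finite_I by (simp add: finite_PiE)

lemma pow_G:
  assumes "x \<in> carrier G"
  shows "x [^]\<^bsub>G\<^esub> (w::nat) = (\<lambda>t\<in>I. (int w * x t) mod modulus t)"
proof (induction w)
  case 0
  then show ?case by (simp add: G_def)
next
  case (Suc w)
  have "x [^]\<^bsub>G\<^esub> Suc w = (x [^]\<^bsub>G\<^esub> w) \<otimes>\<^bsub>G\<^esub> x" by simp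
  also have "\<dots> = (\<lambda>t\<in>I. ((int w * x t) mod modulus t + x t) mod modulus t)"
    unfolding Suc mult_G by (rule restrict_ext) simp
  also have "\<dots> = (\<lambda>t\<in>I. (int (Suc w) * x t) mod modulus t)"
    by (rule restrict_ext) (simp add: mod_add_left_eq mod_add_right_eq algebra_simps)
  finally show ?case .
qed

lemma G_ext:
  assumes "x \<in> carrier G" "y \<in> carrier G" "\<And>t. t \<in> I \<Longrightarrow> x t mod modulus t = y t mod modulus t"
  shows "x = y"
proof (rule PiE_ext[of x I "\<lambda>t. {0..<modulus t}" y])
  show "x \<in> (\<Pi>\<^sub>E t\<in>I. {0..<modulus t})" "y \<in> (\<Pi>\<^sub>E t\<in>I. {0..<modulus t})"
    using assms(1,2) unfolding carrier_G by auto
  fix t assume t: "t \<in> I"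
  have "x t \<in> {0..<modulus t}" "y t \<in> {0..<modulus t}"
    using assms(1,2) t unfolding carrier_G by auto
  then have "x t mod modulus t = x t" "y t mod modulus t = y t" by simp_all
  with assms(3)[OF t] show "x t = y t" by simp
qed

text \<open>Since the carrier is finite, injective endomorphisms are automorphisms.\<close>

lemma iso_of_inj:
  assumes hom: "f \<in> hom G G" and inj: "inj_on f (carrier G)"
  shows "f \<in> iso G G"
proof -
  have "f ` carrier G \<subseteq> carrier G" using hom hom_carrier by blast
  then have "f ` carrier G = carrier G" using endo_inj_surj finite_carrier_G inj by blast
  then show ?thesis using hom inj by (simp add: iso_iff)
qed

definition scale :: "('a \<Rightarrow> int) \<Rightarrow> ('a \<Rightarrow> int) \<Rightarrow> ('a \<Rightarrow> int)" where
  "scale u x = (\<lambda>t\<in>I. (u t * x t) mod modulus t)"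

lemma scale_iso:
  assumes u: "\<And>t. t \<in> I \<Longrightarrow> coprime (u t) (modulus t)"
  shows "scale u \<in> iso G G"
proof (rule iso_of_inj)
  show "scale u \<in> hom G G"
  proof (rule homI)
    fix x assume "x \<in> carrier G"
    then show "scale u x \<in> carrier G" unfolding carrier_G scale_def using modulus_pos by auto
  next
    fix x y assume "x \<in> carrier G" "y \<in> carrier G"
    show "scale u (x \<otimes>\<^bsub>G\<^esub> y) = scale u x \<otimes>\<^bsub>G\<^esub> scale u y"
      unfolding scale_def mult_G
      by (rule restrict_ext) (simp add: mod_mult_right_eq mod_add_eq distrib_left)
  qed
  show "inj_on (scale u) (carrier G)"
  proof (rule inj_onI, rule G_ext)
    fix x y t assume eq: "scale u x = scale u y" and t: "t \<in> I"
    have "(u t * x t) mod modulus t = (u t * y t) mod modulus t"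
      using fun_cong[OF eq, of t] t unfolding scale_def by simp
    then have "modulus t dvd u t * (x t - y t)" by (simp add: mod_eq_dvd_iff right_diff_distrib)
    moreover have "coprime (modulus t) (u t)" using u[OF t] by (simp only: coprime_commute)
    ultimately have "modulus t dvd x t - y t" by (simp add: coprime_dvd_mult_right_iff)
    then show "x t mod modulus t = y t mod modulus t" by (simp add: mod_eq_dvd_iff)
  qed
qed

text \<open>
  Adding \<open>h\<close> times coordinate \<open>t\<close> to coordinate \<open>t'\<close> is an automorphism as soon as it
  is well defined, i.e. when \<open>h\<close> maps \<open>\<int>/modulus t\<close> into \<open>\<int>/modulus t'\<close>.
\<close>

definition transvection :: "'a \<Rightarrow> 'a \<Rightarrow> int \<Rightarrow> ('a \<Rightarrow> int) \<Rightarrow> ('a \<Rightarrow> int)" where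
  "transvection t t' h x = (\<lambda>s\<in>I. if s = t' then (x t' + h * x t) mod modulus t' else x s)"

lemma transvection_iso:
  assumes t: "t \<in> I" and t': "t' \<in> I" and ne: "t \<noteq> t'" and dvd: "modulus t' dvd h * modulus t"
  shows "transvection t t' h \<in> iso G G"
proof (rule iso_of_inj)
  show "transvection t t' h \<in> hom G G"
  proof (rule homI)
    fix x assume "x \<in> carrier G"
    then show "transvection t t' h x \<in> carrier G"
      unfolding carrier_G transvection_def using modulus_pos t' by auto
  next
    fix x y assume x: "x \<in> carrier G" and y: "y \<in> carrier G"
    have "((x t' + y t') mod modulus t' + h * ((x t + y t) mod modulus t)) mod modulus t'
        = ((x t' + y t') + h * (x t + y t)) mod modulus t'"
      by (rule mod_add_mult_dvd[OF dvd])
    also have "\<dots> = ((x t' + h * x t) + (y t' + h * y t)) mod modulus t'"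
      by (simp add: algebra_simps)
    also have "\<dots> = ((x t' + h * x t) mod modulus t' + (y t' + h * y t) mod modulus t') mod modulus t'"
      by (simp add: mod_add_eq)
    finally show "transvection t t' h (x \<otimes>\<^bsub>G\<^esub> y) = transvection t t' h x \<otimes>\<^bsub>G\<^esub> transvection t t' h y"
      unfolding transvection_def mult_G using t t' ne by (intro restrict_ext) auto
  qed
  show "inj_on (transvection t t' h) (carrier G)"
  proof (rule inj_onI, rule G_ext)
    fix x y s assume eq: "transvection t t' h x = transvection t t' h y" and s: "s \<in> I"
    have "x t = y t" using fun_cong[OF eq, of t] t ne unfolding transvection_def by simp
    then show "x s mod modulus s = y s mod modulus s"
      using fun_cong[OF eq, of s] s unfolding transvection_def
      by (cases "s = t'") (auto simp: mod_eq_dvd_iff)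
  qed
qed

definition pow_elem :: "('a \<Rightarrow> nat) \<Rightarrow> ('a \<Rightarrow> int)" where
  "pow_elem v = (\<lambda>t\<in>I. (int (q t) ^ v t) mod modulus t)"

lemma pow_elem_carrier: "pow_elem v \<in> carrier G"
  unfolding pow_elem_def carrier_G using modulus_pos by auto

lemma pow_elem_cong: "(\<And>t. t \<in> I \<Longrightarrow> v t = v' t) \<Longrightarrow> pow_elem v = pow_elem v'"
  unfolding pow_elem_def by (rule restrict_ext) simp

lemma pow_elem_orbit_trans:
  "y \<in> aut_orbit G (pow_elem v) \<Longrightarrow> z \<in> aut_orbit G y \<Longrightarrow> z \<in> aut_orbit G (pow_elem v)"
  using aut_orbit_trans[OF group_G pow_elem_carrier] by blast

text \<open>
  Every element lies in the orbit of some \<open>pow_elem v\<close> with \<open>v \<le> e\<close>: write each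
  coordinate as \<open>q t ^ k\<close> times a unit and scale the unit away.
\<close>

lemma coordinate_normal_form:
  assumes t: "t \<in> I" and z: "z \<in> {0..<modulus t}"
  shows "\<exists>u k. coprime u (modulus t) \<and> k \<le> e t \<and> (u * z) mod modulus t = int (q t) ^ k mod modulus t"
proof (cases "z = 0")
  case True
  then show ?thesis by (intro exI[of _ 1] exI[of _ "e t"]) (simp add: modulus_def)
next
  case False
  define P where "P = int (q t)"
  have P: "prime P" using prime_q[OF t] unfolding P_def by simp
  obtain y where z_eq: "z = P ^ multiplicity P z * y" and y: "\<not> P dvd y"
    using multiplicity_decompose'[OF False] P by (metis not_prime_unit)
  define k where "k = multiplicity P z"
  have "k < e t"
  proof (rule ccontr)
    assume "\<not> k < e t"
    then have "P ^ e t dvd P ^ k" by (simp add: le_imp_power_dvd)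
    then have "modulus t dvd z" using z_eq unfolding k_def modulus_def P_def by (metis dvd_mult2)
    then show False using z False by (auto dest: zdvd_imp_le)
  qed
  have "coprime y (modulus t)"
    unfolding modulus_def using prime_imp_power_coprime[OF P y] P_def by simp
  then obtain a b where ab: "a * y + b * modulus t = 1"
    using bezout_int[of y "modulus t"] by (auto simp: coprime_iff_gcd_eq_1)
  have coprime_a: "coprime a (modulus t)"
  proof (rule coprimeI)
    fix c assume "c dvd a" "c dvd modulus t"
    then have "c dvd a * y + b * modulus t" by simp
    then show "is_unit c" using ab by simp
  qed
  have "a * z = P ^ k * (a * y)" using z_eq unfolding k_def by (simp add: algebra_simps)
  also have "\<dots> = P ^ k - (P ^ k * b) * modulus t"
  proof -
    have "a * y = 1 - b * modulus t" using ab by linarith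
    then show ?thesis by (simp add: right_diff_distrib mult.assoc)
  qed
  finally have "(a * z) mod modulus t = P ^ k mod modulus t" by (simp add: mod_eq_dvd_iff)
  then show ?thesis
    using coprime_a \<open>k < e t\<close> unfolding P_def by (intro exI[of _ a] exI[of _ k]) simp
qed

definition bounded :: "('a \<Rightarrow> nat) \<Rightarrow> bool" where
  "bounded v \<longleftrightarrow> (\<forall>t\<in>I. v t \<le> e t)"

lemma orbit_meets_pow_elem:
  assumes x: "x \<in> carrier G"
  shows "\<exists>v. bounded v \<and> pow_elem v \<in> aut_orbit G x"
proof -
  have normal_forms: "\<forall>t\<in>I. \<exists>uk. coprime (fst uk) (modulus t) \<and> snd uk \<le> e t \<and>
       (fst uk * x t) mod modulus t = int (q t) ^ snd uk mod modulus t"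
  proof
    fix t assume t: "t \<in> I"
    then have "x t \<in> {0..<modulus t}" using x unfolding carrier_G by auto
    then obtain u k where "coprime u (modulus t)" "k \<le> e t"
      "(u * x t) mod modulus t = int (q t) ^ k mod modulus t"
      using coordinate_normal_form[OF t] by blast
    then show "\<exists>uk. coprime (fst uk) (modulus t) \<and> snd uk \<le> e t \<and>
       (fst uk * x t) mod modulus t = int (q t) ^ snd uk mod modulus t"
      by (intro exI[of _ "(u, k)"]) simp
  qed
  obtain f where f: "\<forall>t\<in>I. coprime (fst (f t)) (modulus t) \<and> snd (f t) \<le> e t \<and>
       (fst (f t) * x t) mod modulus t = int (q t) ^ snd (f t) mod modulus t"
    using bchoice[OF normal_forms] by blast
  define u k where "u = fst \<circ> f" and "k = snd \<circ> f"
  have uk: "coprime (u t) (modulus t)" "k t \<le> e t"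
    "(u t * x t) mod modulus t = int (q t) ^ k t mod modulus t" if "t \<in> I" for t
    using f that unfolding u_def k_def by auto
  have "scale u x = pow_elem k"
    unfolding scale_def pow_elem_def by (rule restrict_ext) (use uk in simp)
  moreover have "scale u x \<in> aut_orbit G x"
    by (rule iso_in_aut_orbit[OF scale_iso]) (use uk in simp)
  ultimately have "pow_elem k \<in> aut_orbit G x" by simp
  moreover have "bounded k" using uk(2) unfolding bounded_def by blast
  ultimately show ?thesis by blast
qed

lemma transvection_pow_elem:
  assumes t: "t \<in> I" and t': "t' \<in> I" and ne: "t \<noteq> t'"
    and dvd: "modulus t' dvd h * modulus t"
    and val: "(int (q t') ^ v t' + h * int (q t) ^ v t) mod modulus t' = int (q t') ^ v' mod modulus t'"
  shows "pow_elem (v(t' := v')) \<in> aut_orbit G (pow_elem v)"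
proof -
  have "(int (q t') ^ v t' mod modulus t' + h * (int (q t) ^ v t mod modulus t)) mod modulus t'
      = int (q t') ^ v' mod modulus t'"
    using mod_add_mult_dvd[OF dvd] val by simp
  then have "transvection t t' h (pow_elem v) = pow_elem (v(t' := v'))"
    unfolding transvection_def pow_elem_def using t t' by (intro restrict_ext) auto
  then show ?thesis using iso_in_aut_orbit[OF transvection_iso[OF t t' ne dvd], of "pow_elem v"] by simp
qed

lemma lower_exponent:
  assumes t: "t \<in> I" and t': "t' \<in> I" and ne: "t \<noteq> t'" and same_prime: "q t = q t'"
    and less: "v t + (e t' - e t) < v t'"
  shows "pow_elem (v(t' := v t + (e t' - e t))) \<in> aut_orbit G (pow_elem v)"
proof -
  define P where "P = int (q t)"
  define w where "w = v t + (e t' - e t)"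
  define h where "h = P ^ (e t' - e t) * (1 - P ^ (v t' - w))"
  have "h * P ^ v t = P ^ (e t' - e t + v t) - P ^ (e t' - e t + v t + (v t' - w))"
    unfolding h_def by (simp add: algebra_simps power_add)
  also have "\<dots> = P ^ w - P ^ v t'" using less unfolding w_def by (simp add: add.commute)
  finally have val: "(int (q t') ^ v t' + h * int (q t) ^ v t) mod modulus t' = int (q t') ^ w mod modulus t'"
    using same_prime unfolding P_def by simp
  have "h * modulus t = P ^ (e t' - e t + e t) * (1 - P ^ (v t' - w))"
    unfolding h_def modulus_def P_def by (simp add: algebra_simps power_add)
  moreover have "P ^ e t' dvd P ^ (e t' - e t + e t)" by (rule le_imp_power_dvd) simp
  ultimately have "modulus t' dvd h * modulus t" unfolding modulus_def P_def using same_prime by simp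
  from transvection_pow_elem[OF t t' ne this val] show ?thesis unfolding w_def .
qed

lemma clear_exponent:
  assumes t: "t \<in> I" and t': "t' \<in> I" and ne: "t \<noteq> t'" and same_prime: "q t = q t'"
    and le: "v t + (e t' - e t) \<le> v t'"
  shows "pow_elem (v(t' := e t')) \<in> aut_orbit G (pow_elem v)"
proof -
  define P where "P = int (q t)"
  define h where "h = - (P ^ (e t' - e t) * P ^ (v t' - (v t + (e t' - e t))))"
  have "h * P ^ v t = - (P ^ (e t' - e t + v t + (v t' - (v t + (e t' - e t)))))"
    unfolding h_def by (simp add: algebra_simps power_add)
  also have "\<dots> = - (P ^ v t')" using le by (simp add: add.commute)
  finally have val: "(int (q t') ^ v t' + h * int (q t) ^ v t) mod modulus t' = int (q t') ^ e t' mod modulus t'"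
    using same_prime unfolding P_def modulus_def by simp
  have "h * modulus t = - (P ^ (e t' - e t + e t) * P ^ (v t' - (v t + (e t' - e t))))"
    unfolding h_def modulus_def P_def by (simp add: algebra_simps power_add)
  moreover have "P ^ e t' dvd P ^ (e t' - e t + e t)" by (rule le_imp_power_dvd) simp
  ultimately have "modulus t' dvd h * modulus t" unfolding modulus_def P_def using same_prime by simp
  from transvection_pow_elem[OF t t' ne this val] show ?thesis .
qed

lemma clear_duplicate:
  assumes t: "t \<in> I" and r: "r \<in> I" and ne: "r \<noteq> t" and "q r = q t" "e r = e t"
  shows "pow_elem ((v(r := min (v r) (v t)))(t := e t)) \<in> aut_orbit G (pow_elem v)"
proof (cases "v r \<le> v t")
  case True
  then show ?thesis using clear_exponent[OF r t ne, of v] assms by simp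
next
  case False
  have "pow_elem (v(r := v t)) \<in> aut_orbit G (pow_elem v)"
    using lower_exponent[OF t r ne[symmetric], of v] assms False by simp
  moreover have "pow_elem ((v(r := v t))(t := e t)) \<in> aut_orbit G (pow_elem (v(r := v t)))"
    using clear_exponent[OF r t ne, of "v(r := v t)"] assms ne by simp
  ultimately show ?thesis using False pow_elem_orbit_trans by simp
qed


text \<open>
  The type of a coordinate \<open>t\<close> is the pair \<open>(q t, e t)\<close>; each type has a chosen
  representative coordinate.
\<close>

definition type_rep :: "nat \<Rightarrow> nat \<Rightarrow> 'a" where
  "type_rep p x = (SOME t. t \<in> I \<and> q t = p \<and> e t = x)"

definition rep :: "'a \<Rightarrow> 'a" where
  "rep t = type_rep (q t) (e t)"

lemma rep: "t \<in> I \<Longrightarrow> rep t \<in> I \<and> q (rep t) = q t \<and> e (rep t) = e t"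
  unfolding rep_def type_rep_def by (rule someI[of _ t]) simp

lemma rep_rep: "t \<in> I \<Longrightarrow> rep (rep t) = rep t"
  using rep[of t] by (simp add: rep_def)

text \<open>
  Reduction of an arbitrary element: first clear every coordinate that is not the
  representative of its type, then lower exponents until they are saturated, i.e.
  \<open>v r' \<le> v r + (e r' - e r)\<close> for all representatives \<open>r, r'\<close> of the same prime.
\<close>

definition off_rep_trivial :: "('a \<Rightarrow> nat) \<Rightarrow> bool" where
  "off_rep_trivial v \<longleftrightarrow> (\<forall>t\<in>I. rep t \<noteq> t \<longrightarrow> v t = e t)"

definition saturated :: "('a \<Rightarrow> nat) \<Rightarrow> bool" where
  "saturated v \<longleftrightarrow> (\<forall>r\<in>I. \<forall>r'\<in>I. rep r = r \<and> rep r' = r' \<and> q r = q r' \<longrightarrow> v r' \<le> v r + (e r' - e r))"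

lemma clear_non_representatives:
  assumes "bounded v"
  shows "\<exists>v'. bounded v' \<and> off_rep_trivial v' \<and> pow_elem v' \<in> aut_orbit G (pow_elem v)"
  using assms
proof (induction "card {t\<in>I. rep t \<noteq> t \<and> v t < e t}" arbitrary: v rule: less_induct)
  case less
  show ?case
  proof (cases "\<exists>t\<in>I. rep t \<noteq> t \<and> v t < e t")
    case False
    then have "off_rep_trivial v"
      using False less.prems unfolding off_rep_trivial_def bounded_def by (auto simp: le_less)
    then show ?thesis using less.prems aut_orbit_self[of "pow_elem v" G] by blast
  next
    case True
    then obtain t where t: "t \<in> I" "rep t \<noteq> t" "v t < e t" by blast
    define r where "r = rep t"
    have r: "r \<in> I" "q r = q t" "e r = e t" "rep r = r"
      using rep[OF t(1)] rep_rep[OF t(1)] unfolding r_def by auto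
    define v' where "v' = (v(r := min (v r) (v t)))(t := e t)"
    have orbit: "pow_elem v' \<in> aut_orbit G (pow_elem v)"
      unfolding v'_def by (rule clear_duplicate[OF t(1) r(1)]) (use r t(2) in \<open>auto simp: r_def\<close>)
    have bounded: "bounded v'"
      using less.prems r unfolding bounded_def v'_def by auto
    have pending: "{s\<in>I. rep s \<noteq> s \<and> v' s < e s} = {s\<in>I. rep s \<noteq> s \<and> v s < e s} - {t}"
      using r unfolding v'_def by auto
    have "card ({s\<in>I. rep s \<noteq> s \<and> v s < e s} - {t}) < card {s\<in>I. rep s \<noteq> s \<and> v s < e s}"
      by (rule card_Diff1_less) (use t finite_I in auto)
    then have "card {s\<in>I. rep s \<noteq> s \<and> v' s < e s} < card {s\<in>I. rep s \<noteq> s \<and> v s < e s}"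
      by (simp only: pending)
    then obtain w where w: "bounded w" "off_rep_trivial w" "pow_elem w \<in> aut_orbit G (pow_elem v')"
      using less.hyps[OF _ bounded] by blast
    have "pow_elem w \<in> aut_orbit G (pow_elem v)" by (rule pow_elem_orbit_trans[OF orbit w(3)])
    then show ?thesis using w(1,2) by blast
  qed
qed

lemma saturate:
  assumes "bounded v" "off_rep_trivial v"
  shows "\<exists>v'. bounded v' \<and> off_rep_trivial v' \<and> saturated v' \<and> pow_elem v' \<in> aut_orbit G (pow_elem v)"
  using assms
proof (induction "\<Sum>t\<in>I. v t" arbitrary: v rule: less_induct)
  case less
  show ?case
  proof (cases "saturated v")
    case True
    then show ?thesis using less.prems aut_orbit_self[of "pow_elem v" G] by blast
  next
    case False
    then obtain r r' where rr: "r \<in> I" "r' \<in> I" "rep r = r" "rep r' = r'" "q r = q r'"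
      and lt: "v r + (e r' - e r) < v r'" unfolding saturated_def by auto
    have ne: "r \<noteq> r'" using lt by auto
    define v' where "v' = v(r' := v r + (e r' - e r))"
    have orbit: "pow_elem v' \<in> aut_orbit G (pow_elem v)"
      unfolding v'_def by (rule lower_exponent[OF rr(1,2) ne rr(5) lt])
    have "v r' \<le> e r'" using less.prems(1) rr(2) unfolding bounded_def by blast
    then have "bounded v'" using less.prems(1) lt unfolding bounded_def v'_def by auto
    moreover have "off_rep_trivial v'"
      using less.prems(2) rr(4) unfolding off_rep_trivial_def v'_def by auto
    ultimately have invariants: "bounded v'" "off_rep_trivial v'" by blast+
    have "(\<Sum>t\<in>I. v' t) < (\<Sum>t\<in>I. v t)"
      by (rule sum_strict_mono_ex1[OF finite_I]) (use lt rr(2) in \<open>auto simp: v'_def\<close>)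
    then obtain w where w: "bounded w" "off_rep_trivial w" "saturated w"
        "pow_elem w \<in> aut_orbit G (pow_elem v')"
      using less.hyps[OF _ invariants] by blast
    have "pow_elem w \<in> aut_orbit G (pow_elem v)" by (rule pow_elem_orbit_trans[OF orbit w(4)])
    then show ?thesis using w(1-3) by blast
  qed
qed

text \<open>
  The orbit data: for every prime \<open>p\<close> occurring, a height profile on the set of
  exponents occurring with \<open>p\<close>; the canonical element of a profile \<open>a\<close> has
  coordinate \<open>p ^ a p x\<close> at the representative of type \<open>(p, x)\<close> and \<open>0\<close> elsewhere.
\<close>

definition exponents :: "nat \<Rightarrow> nat set" where
  "exponents p = e ` {t\<in>I. q t = p}"

definition profiles :: "(nat \<Rightarrow> nat \<Rightarrow> nat) set" where
  "profiles = (\<Pi>\<^sub>E p\<in>q ` I. height_profiles (exponents p))"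

definition canonical :: "(nat \<Rightarrow> nat \<Rightarrow> nat) \<Rightarrow> ('a \<Rightarrow> int)" where
  "canonical a = pow_elem (\<lambda>t. if rep t = t then a (q t) (e t) else e t)"

lemma canonical_apply:
  "t \<in> I \<Longrightarrow> canonical a t = int (q t) ^ (if rep t = t then a (q t) (e t) else e t) mod modulus t"
  unfolding canonical_def pow_elem_def by simp

lemma canonical_carrier: "canonical a \<in> carrier G"
  unfolding canonical_def by (rule pow_elem_carrier)

lemma exponents_mem: "t \<in> I \<Longrightarrow> e t \<in> exponents (q t)"
  unfolding exponents_def by blast

lemma profile_heights:
  assumes "a \<in> profiles" "t \<in> I"
  shows "a (q t) \<in> height_profiles (exponents (q t))"
  using assms unfolding profiles_def by blast

lemma saturated_profile:
  assumes v: "bounded v" "off_rep_trivial v" "saturated v"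
  defines "a \<equiv> \<lambda>p\<in>q ` I. \<lambda>x\<in>exponents p. v (type_rep p x)"
  shows "a \<in> profiles" and "canonical a = pow_elem v"
proof -
  have rep_a: "a (q t) (e t) = v (rep t)" if "t \<in> I" for t
    using that exponents_mem[OF that] unfolding a_def rep_def by simp
  show "canonical a = pow_elem v"
    unfolding canonical_def
    by (rule pow_elem_cong) (use v(2) rep_a in \<open>auto simp: off_rep_trivial_def\<close>)
  have "a p \<in> height_profiles (exponents p)" if p: "p \<in> q ` I" for p
  proof -
    have rep_of: "\<exists>r\<in>I. rep r = r \<and> q r = p \<and> e r = x \<and> a p x = v r" if x: "x \<in> exponents p" for x
    proof -
      obtain t where t: "t \<in> I" "q t = p" "e t = x" using x unfolding exponents_def by blast
      then show ?thesis using rep[OF t(1)] rep_rep[OF t(1)] rep_a[OF t(1)] by (intro bexI[of _ "rep t"]) auto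
    qed
    have ext: "a p \<in> exponents p \<rightarrow>\<^sub>E UNIV" using p unfolding a_def by simp
    have bound: "\<forall>x\<in>exponents p. a p x \<le> x"
      using rep_of v(1) unfolding bounded_def by fastforce
    have mono: "a p x \<le> a p y \<and> x - a p x \<le> y - a p y"
      if xy: "x \<in> exponents p" "y \<in> exponents p" "x < y" for x y
    proof -
      obtain r r' where r: "r \<in> I" "rep r = r" "q r = p" "e r = x" "a p x = v r"
        and r': "r' \<in> I" "rep r' = r'" "q r' = p" "e r' = y" "a p y = v r'"
        using rep_of[OF xy(1)] rep_of[OF xy(2)] by blast
      have sat: "v s' \<le> v s + (e s' - e s)"
        if "s \<in> I" "s' \<in> I" "rep s = s" "rep s' = s'" "q s = q s'" for s s'
        using v(3) that unfolding saturated_def by blast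
      have "v r' \<le> v r + (y - x)" "v r \<le> v r' + (x - y)"
        using sat[OF r(1) r'(1) r(2) r'(2)] sat[OF r'(1) r(1) r'(2) r(2)] r(3,4) r'(3,4) by simp_all
      then show ?thesis using r r' xy(3) by simp
    qed
    show ?thesis unfolding height_profiles_def using ext bound mono by blast
  qed
  then show "a \<in> profiles" unfolding profiles_def a_def by auto
qed


lemma orbit_meets_canonical:
  assumes x: "x \<in> carrier G"
  shows "\<exists>a\<in>profiles. canonical a \<in> aut_orbit G x"
proof -
  obtain v0 where v0: "bounded v0" "pow_elem v0 \<in> aut_orbit G x"
    using orbit_meets_pow_elem[OF x] by blast
  obtain v1 where v1: "bounded v1" "off_rep_trivial v1" "pow_elem v1 \<in> aut_orbit G (pow_elem v0)"
    using clear_non_representatives[OF v0(1)] by blast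
  obtain v where v: "bounded v" "off_rep_trivial v" "saturated v" "pow_elem v \<in> aut_orbit G (pow_elem v1)"
    using saturate[OF v1(1,2)] by blast
  have "pow_elem v1 \<in> aut_orbit G x" by (rule aut_orbit_trans[OF group_G x v0(2) v1(3)])
  then have orbit: "pow_elem v \<in> aut_orbit G x" by (rule aut_orbit_trans[OF group_G x _ v(4)])
  define a where "a = (\<lambda>p\<in>q ` I. \<lambda>x\<in>exponents p. v (type_rep p x))"
  have "a \<in> profiles" "canonical a = pow_elem v"
    unfolding a_def by (rule saturated_profile[OF v(1-3)])+
  then show ?thesis using orbit by (intro bexI[of _ a]) simp_all
qed

text \<open>
  Separating canonical elements: with \<open>P = q t\<close>, \<open>E = e t\<close> and \<open>C\<close> the product of the
  orders of the coordinates of other primes, the pair \<open>(C * P ^ E, C * P ^ (E - h - 1))\<close> lies in the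
  power pattern of \<open>canonical a\<close> iff \<open>h < a P E\<close>.
\<close>

definition cofactor :: "nat \<Rightarrow> nat" where
  "cofactor P = (\<Prod>s\<in>{s\<in>I. q s \<noteq> P}. q s ^ e s)"

lemma prime_not_dvd_cofactor:
  assumes P: "prime P" shows "\<not> P dvd cofactor P"
proof
  assume "P dvd cofactor P"
  moreover have "finite {s\<in>I. q s \<noteq> P}" using finite_I by simp
  ultimately have "\<exists>s\<in>{s\<in>I. q s \<noteq> P}. P dvd q s ^ e s"
    unfolding cofactor_def by (simp only: prime_dvd_prod_iff[OF _ P])
  then obtain s where s: "s \<in> I" "q s \<noteq> P" "P dvd q s ^ e s" by blast
  then have "P = q s" using prime_dvd_power[OF P s(3)] primes_dvd_imp_eq[OF P prime_q[OF s(1)]] by simp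
  then show False using s(2) by simp
qed

lemma modulus_dvd_cofactor:
  assumes "s \<in> I" "q s \<noteq> P" shows "modulus s dvd int (cofactor P)"
proof -
  have "q s ^ e s dvd cofactor P"
    unfolding cofactor_def by (rule dvd_prodI) (use assms finite_I in auto)
  then have "int (q s ^ e s) dvd int (cofactor P)" by (simp only: of_nat_dvd_iff)
  then show ?thesis unfolding modulus_def by simp
qed

lemma pattern_excludes:
  assumes t: "t \<in> I" and h: "a (q t) (e t) < e t"
  defines "h \<equiv> a (q t) (e t)"
  shows "(cofactor (q t) * q t ^ e t, cofactor (q t) * q t ^ (e t - h - 1))
    \<notin> power_pattern G (canonical a)"
proof
  define P E C where "P = q t" and "E = e t" and "C = cofactor (q t)"
  assume "(C * P ^ E, C * P ^ (E - h - 1)) \<in> power_pattern G (canonical a)"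
  then obtain y where y: "y \<in> carrier G"
    and eq: "y [^]\<^bsub>G\<^esub> (C * P ^ E) = canonical a [^]\<^bsub>G\<^esub> (C * P ^ (E - h - 1))"
    unfolding power_pattern_def P_def E_def C_def by blast
  define r where "r = rep t"
  have r: "r \<in> I" "q r = P" "e r = E" "rep r = r"
    using rep[OF t] rep_rep[OF t] unfolding r_def P_def E_def by auto
  have mod_r: "modulus r = int P ^ E" using r unfolding modulus_def by simp
  have coordinate_r: "int (C * P ^ E) * y r mod modulus r
      = int (C * P ^ (E - h - 1)) * canonical a r mod modulus r"
    using fun_cong[OF eq, of r] r(1) pow_G[OF y] pow_G[OF canonical_carrier] by simp
  have zero: "int (C * P ^ E) * y r mod modulus r = 0" unfolding mod_r by simp
  have canon_r: "canonical a r = int P ^ h mod int P ^ E"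
    using canonical_apply[OF r(1), of a] r mod_r unfolding h_def P_def E_def by simp
  have "int (C * P ^ (E - h - 1)) * canonical a r mod modulus r
      = int (C * P ^ (E - h - 1)) * int P ^ h mod int P ^ E"
    unfolding canon_r mod_r by (simp only: mod_mult_right_eq)
  also have "\<dots> = int C * int P ^ (E - h - 1 + h) mod int P ^ E"
    by (simp add: power_add mult.assoc)
  also have "E - h - 1 + h = E - 1" using h unfolding h_def E_def by simp
  finally have "int P ^ E dvd int C * int P ^ (E - 1)"
    using coordinate_r zero by (simp add: dvd_eq_mod_eq_0)
  moreover have "E = Suc (E - 1)" using h unfolding E_def by simp
  then have "int P ^ E = int P ^ (E - 1) * int P" by (metis power_Suc2)
  ultimately have "int P ^ (E - 1) * int P dvd int P ^ (E - 1) * int C" by (simp add: mult.commute)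
  then have "int P dvd int C"
    using prime_gt_0_nat[OF prime_q[OF t]] unfolding P_def by (subst (asm) dvd_mult_cancel_left) auto
  then show False
    using prime_not_dvd_cofactor[OF prime_q[OF t]] unfolding P_def C_def by (simp only: of_nat_dvd_iff)
qed

text \<open>
  The witness showing that the \<open>(C * P ^ \<beta>)\<close>-th power of \<open>canonical a\<close> is a
  \<open>(C * P ^ E)\<close>-th power: at each representative \<open>s\<close> of prime \<open>P\<close> whose target
  exponent \<open>\<beta> + b (e s)\<close> is below \<open>e s\<close>, take the root \<open>P ^ (\<beta> + b (e s) - E)\<close>.
\<close>

definition root_witness :: "(nat \<Rightarrow> nat) \<Rightarrow> nat \<Rightarrow> nat \<Rightarrow> nat \<Rightarrow> ('a \<Rightarrow> int)" where
  "root_witness b P E \<beta> = (\<lambda>s\<in>I. if q s = P \<and> rep s = s \<and> \<beta> + b (e s) < e s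
    then int P ^ (\<beta> + b (e s) - E) mod modulus s else 0)"

lemma root_witness_carrier: "root_witness b P E \<beta> \<in> carrier G"
  unfolding root_witness_def carrier_G using modulus_pos by auto

lemma root_witness_pow:
  assumes a: "a \<in> profiles" and t: "t \<in> I" and h: "h < a (q t) (e t)"
  defines "P \<equiv> q t" and "E \<equiv> e t" and "C \<equiv> cofactor (q t)" and "\<beta> \<equiv> e t - h - 1"
  shows "root_witness (a P) P E \<beta> [^]\<^bsub>G\<^esub> (C * P ^ E) = canonical a [^]\<^bsub>G\<^esub> (C * P ^ \<beta>)"
proof -
  define b y where "b = a P" and "y = root_witness (a P) P E \<beta>"
  have b: "b \<in> height_profiles (exponents P)"
    using profile_heights[OF a t] unfolding b_def P_def .
  have E: "E \<in> exponents P" using exponents_mem[OF t] unfolding P_def E_def .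
  have above_E: "E \<le> \<beta> + b (e s)" if s: "s \<in> I" "q s = P" "\<beta> + b (e s) < e s" for s
    using height_profile_above[of b "exponents P" E "e s" h] b E exponents_mem[OF s(1)] s h
    unfolding \<beta>_def b_def P_def E_def by simp
  have y: "y \<in> carrier G" unfolding y_def by (rule root_witness_carrier)
  have "y [^]\<^bsub>G\<^esub> (C * P ^ E) = canonical a [^]\<^bsub>G\<^esub> (C * P ^ \<beta>)"
    unfolding pow_G[OF y] pow_G[OF canonical_carrier]
  proof (rule restrict_ext)
    fix s assume s: "s \<in> I"
    show "int (C * P ^ E) * y s mod modulus s = int (C * P ^ \<beta>) * canonical a s mod modulus s"
    proof (cases "q s = P \<and> rep s = s")
      case False
      have "modulus s dvd int (C * P ^ \<beta>) * canonical a s"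
      proof (cases "q s = P")
        case True
        then have "canonical a s = 0" using False canonical_apply[OF s, of a] unfolding modulus_def by simp
        then show ?thesis by simp
      next
        case False
        then have "modulus s dvd int C" using modulus_dvd_cofactor[OF s] unfolding C_def P_def by blast
        moreover have "int C dvd int (C * P ^ \<beta>) * canonical a s" by (simp add: mult.assoc)
        ultimately show ?thesis by (rule dvd_trans)
      qed
      moreover have "y s = 0" using False s unfolding y_def root_witness_def b_def by auto
      ultimately show ?thesis by (simp add: dvd_eq_mod_eq_0)
    next
      case True
      then have mod_s: "modulus s = int P ^ e s" unfolding modulus_def by simp
      have "canonical a s = int P ^ b (e s) mod modulus s"
        using canonical_apply[OF s, of a] True unfolding b_def by simp
      then have "int (C * P ^ \<beta>) * canonical a s mod modulus s
          = int (C * P ^ \<beta>) * int P ^ b (e s) mod modulus s"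
        by (simp only: mod_mult_right_eq)
      also have "\<dots> = int C * int P ^ (\<beta> + b (e s)) mod modulus s"
        by (simp add: power_add mult.assoc)
      finally have rhs: "int (C * P ^ \<beta>) * canonical a s mod modulus s
          = int C * int P ^ (\<beta> + b (e s)) mod modulus s" .
      show ?thesis
      proof (cases "\<beta> + b (e s) < e s")
        case False
        then have "modulus s dvd int C * int P ^ (\<beta> + b (e s))"
          unfolding mod_s by (simp add: le_imp_power_dvd)
        moreover have "y s = 0" using False s unfolding y_def root_witness_def b_def by simp
        ultimately show ?thesis unfolding rhs by (simp add: dvd_eq_mod_eq_0)
      next
        case less: True
        have "y s = int P ^ (\<beta> + b (e s) - E) mod modulus s"
          using s True less unfolding y_def root_witness_def b_def by simp
        then have "int (C * P ^ E) * y s mod modulus s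
            = int (C * P ^ E) * int P ^ (\<beta> + b (e s) - E) mod modulus s"
          by (simp only: mod_mult_right_eq)
        also have "\<dots> = int C * int P ^ (E + (\<beta> + b (e s) - E)) mod modulus s"
          by (simp add: power_add mult.assoc)
        also have "E + (\<beta> + b (e s) - E) = \<beta> + b (e s)"
          using above_E[OF s _ less] True by simp
        finally show ?thesis unfolding rhs .
      qed
    qed
  qed
  then show ?thesis unfolding y_def .
qed

lemma pattern_includes:
  assumes a: "a \<in> profiles" and t: "t \<in> I" and h: "h < a (q t) (e t)"
  shows "(cofactor (q t) * q t ^ e t, cofactor (q t) * q t ^ (e t - h - 1))
    \<in> power_pattern G (canonical a)"
  using root_witness_pow[OF a t h] root_witness_carrier unfolding power_pattern_def by blast

lemma canonical_orbit_inj: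
  assumes a: "a \<in> profiles" and a': "a' \<in> profiles"
    and same: "canonical a' \<in> aut_orbit G (canonical a)"
  shows "a = a'"
proof (rule ccontr)
  have pattern: "power_pattern G (canonical a') = power_pattern G (canonical a)"
    using power_pattern_orbit[OF group_G canonical_carrier same] .
  have separates: "power_pattern G (canonical b) \<noteq> power_pattern G (canonical b')"
    if "b \<in> profiles" "b' \<in> profiles" "t \<in> I" "b (q t) (e t) < b' (q t) (e t)" for b b' t
  proof -
    have "b' (q t) (e t) \<le> e t"
      using profile_heights[OF that(2,3)] exponents_mem[OF that(3)] unfolding height_profiles_def by blast
    then show ?thesis
      using pattern_excludes[OF that(3), of b] pattern_includes[OF that(2,3,4)] that(4) by auto
  qed
  assume "a \<noteq> a'"
  then obtain p where p: "p \<in> q ` I" "a p \<noteq> a' p"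
    using PiE_ext[of a "q ` I" _ a'] a a' unfolding profiles_def by blast
  have "a p \<in> exponents p \<rightarrow>\<^sub>E UNIV" "a' p \<in> exponents p \<rightarrow>\<^sub>E UNIV"
    using a a' p(1) unfolding profiles_def height_profiles_def by auto
  then obtain x where x: "x \<in> exponents p" "a p x \<noteq> a' p x"
    using PiE_ext[of "a p" "exponents p" _ "a' p"] p(2) by blast
  then obtain t where t: "t \<in> I" "q t = p" "e t = x" unfolding exponents_def by blast
  consider "a p x < a' p x" | "a' p x < a p x" using x(2) by linarith
  then show False
    using separates[OF a a' t(1)] separates[OF a' a t(1)] pattern t by cases auto
qed

theorem num_aut_orbits_G:
  "num_aut_orbits G = (\<Prod>p\<in>q ` I. card (height_profiles (exponents p)))"
proof -
  have "aut_orbit G ` carrier G = (\<lambda>a. aut_orbit G (canonical a)) ` profiles"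
  proof
    show "aut_orbit G ` carrier G \<subseteq> (\<lambda>a. aut_orbit G (canonical a)) ` profiles"
    proof (rule image_subsetI)
      fix x assume x: "x \<in> carrier G"
      then obtain a where "a \<in> profiles" "canonical a \<in> aut_orbit G x"
        using orbit_meets_canonical by blast
      then show "aut_orbit G x \<in> (\<lambda>a. aut_orbit G (canonical a)) ` profiles"
        using aut_orbit_eq[OF group_G x] by (intro image_eqI[of _ _ a]) simp_all
    qed
    show "(\<lambda>a. aut_orbit G (canonical a)) ` profiles \<subseteq> aut_orbit G ` carrier G"
      using canonical_carrier by blast
  qed
  moreover have "inj_on (\<lambda>a. aut_orbit G (canonical a)) profiles"
  proof (rule inj_onI)
    fix a a' assume "a \<in> profiles" "a' \<in> profiles"
      and "aut_orbit G (canonical a) = aut_orbit G (canonical a')"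
    then show "a = a'" using aut_orbit_self[of "canonical a'" G] by (intro canonical_orbit_inj) simp_all
  qed
  ultimately have "num_aut_orbits G = card profiles"
    unfolding num_aut_orbits_def by (simp add: card_image)
  then show ?thesis unfolding profiles_def using finite_I by (simp add: card_PiE)
qed

end

lemma num_aut_orbits_product_group:
  assumes "finite I" "\<And>t. t \<in> I \<Longrightarrow> prime (q t)"
  shows "num_aut_orbits (product_group I (\<lambda>t. integer_mod_group (q t ^ e t)))
    = (\<Prod>p\<in>q ` I. card (height_profiles (e ` {t\<in>I. q t = p})))"
proof -
  interpret prime_power_product I q e using assms by unfold_locales
  show ?thesis using num_aut_orbits_G unfolding G_def exponents_def .
qed

lemma num_aut_orbits_reduced_group:
  assumes "prime p" "1 \<le> s"
  shows "num_aut_orbits (reduced_group p s r) = card (height_profiles (r ` {..<s}))"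
proof -
  have "0 \<in> {..<s}" using assms(2) by simp
  then have sets: "(\<lambda>_. p) ` {..<s} = {p}" "{t\<in>{..<s}. p = p} = {..<s}" by auto
  have "num_aut_orbits (reduced_group p s r)
      = (\<Prod>p'\<in>(\<lambda>_. p) ` {..<s}. card (height_profiles (r ` {t\<in>{..<s}. p = p'})))"
    unfolding reduced_group_def by (rule num_aut_orbits_product_group) (use assms in auto)
  also have "\<dots> = card (height_profiles (r ` {t\<in>{..<s}. p = p}))" unfolding sets(1) by simp
  finally show ?thesis unfolding sets(2) .
qed

text \<open>
  In the whole group the prime \<open>p j\<close> occurs exactly with the exponents \<open>r j i\<close>
  (every multiplicity \<open>k j i\<close> being positive), so its factor is that of the reduced group.
\<close>

lemma num_aut_orbits_whole_group:
  assumes primes: "\<And>j. j < m \<Longrightarrow> prime (p j)" and distinct: "inj_on p {..<m}"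
    and s_pos: "\<And>j. j < m \<Longrightarrow> 1 \<le> s j"
    and k_pos: "\<And>j i. j < m \<Longrightarrow> i < s j \<Longrightarrow> 1 \<le> k j i"
  shows "num_aut_orbits (whole_group m p s r k) = (\<Prod>j<m. card (height_profiles (r j ` {..<s j})))"
proof -
  define I where "I = {(j, i, l). j < m \<and> i < s j \<and> l < k j i}"
  define q where "q = (\<lambda>(j::nat, i::nat, l::nat). p j)"
  define e where "e = (\<lambda>(j::nat, i::nat, l::nat). r j i)"
  have finite_I: "finite I"
  proof (rule finite_subset)
    show "I \<subseteq> Sigma {..<m} (\<lambda>j. Sigma {..<s j} (\<lambda>i. {..<k j i}))" unfolding I_def by auto
  qed auto
  have whole: "whole_group m p s r k = product_group I (\<lambda>t. integer_mod_group (q t ^ e t))"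
    unfolding whole_group_def I_def q_def e_def by (simp add: case_prod_beta)
  have primes_I: "q ` I = p ` {..<m}"
  proof
    show "p ` {..<m} \<subseteq> q ` I"
    proof
      fix x assume "x \<in> p ` {..<m}"
      then obtain j where j: "j < m" "x = p j" by blast
      then have "(j, 0, 0) \<in> I" using s_pos k_pos unfolding I_def by fastforce
      then show "x \<in> q ` I" unfolding q_def j(2) by force
    qed
  qed (auto simp: I_def q_def)
  have exponents_I: "e ` {t\<in>I. q t = p j} = r j ` {..<s j}" if j: "j < m" for j
  proof
    show "e ` {t\<in>I. q t = p j} \<subseteq> r j ` {..<s j}"
      using inj_onD[OF distinct] j unfolding I_def q_def e_def by auto
    show "r j ` {..<s j} \<subseteq> e ` {t\<in>I. q t = p j}"
    proof
      fix x assume "x \<in> r j ` {..<s j}"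
      then obtain i where i: "i < s j" "x = r j i" by blast
      then have "(j, i, 0) \<in> {t\<in>I. q t = p j}"
        using j k_pos[OF j i(1)] unfolding I_def q_def by auto
      then show "x \<in> e ` {t\<in>I. q t = p j}" unfolding e_def i(2) by force
    qed
  qed
  have prime_types: "prime (q t)" if t: "t \<in> I" for t
    using t primes unfolding I_def q_def by auto
  have "num_aut_orbits (whole_group m p s r k) = (\<Prod>x\<in>p ` {..<m}. card (height_profiles (e ` {t\<in>I. q t = x})))"
    unfolding whole primes_I[symmetric]
    by (rule num_aut_orbits_product_group[OF finite_I prime_types])
  also have "\<dots> = (\<Prod>j<m. card (height_profiles (e ` {t\<in>I. q t = p j})))"
    by (simp add: prod.reindex[OF distinct])
  also have "\<dots> = (\<Prod>j<m. card (height_profiles (r j ` {..<s j})))"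
    by (rule prod.cong) (simp_all add: exponents_I)
  finally show ?thesis .
qed

theorem theorem2:
  fixes m :: nat and p :: "nat \<Rightarrow> nat" and s :: "nat \<Rightarrow> nat"
    and r :: "nat \<Rightarrow> nat \<Rightarrow> nat" and k :: "nat \<Rightarrow> nat \<Rightarrow> nat"
  assumes primes: "\<And>j. j < m \<Longrightarrow> prime (p j)"
    and distinct: "inj_on p {..<m}"
    and s_pos: "\<And>j. j < m \<Longrightarrow> s j \<ge> 1"
    and r_pos: "\<And>j. j < m \<Longrightarrow> r j 0 \<ge> 1"
    and r_incr: "\<And>j i. j < m \<Longrightarrow> i + 1 < s j \<Longrightarrow> r j i < r j (i + 1)"
    and k_pos: "\<And>j i. j < m \<Longrightarrow> i < s j \<Longrightarrow> k j i \<ge> 1"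
  shows "num_aut_orbits (whole_group m p s r k)
           = (\<Prod>j<m. num_aut_orbits (reduced_group (p j) (s j) (r j)))
       \<and> num_aut_orbits (whole_group m p s r k)
           = (\<Prod>j<m. (r j 0 + 1) * (\<Prod>i<s j - 1. r j (i + 1) - r j i + 1))"
proof -
  have reduced: "num_aut_orbits (reduced_group (p j) (s j) (r j)) = card (height_profiles (r j ` {..<s j}))"
    if j: "j < m" for j
    by (rule num_aut_orbits_reduced_group) (use primes[OF j] s_pos[OF j] in auto)
  have formula: "card (height_profiles (r j ` {..<s j})) = (r j 0 + 1) * (\<Prod>i<s j - 1. r j (i + 1) - r j i + 1)"
    if j: "j < m" for j
  proof -
    have "card (height_profiles (r j ` {..<Suc (s j - 1)}))
        = (r j 0 + 1) * (\<Prod>i<s j - 1. r j (i + 1) - r j i + 1)"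
      by (rule card_height_profiles_image, rule r_incr[OF j]) linarith
    moreover have "Suc (s j - 1) = s j" using s_pos[OF j] by simp
    ultimately show ?thesis by simp
  qed
  have whole: "num_aut_orbits (whole_group m p s r k) = (\<Prod>j<m. card (height_profiles (r j ` {..<s j})))"
    by (rule num_aut_orbits_whole_group) (use primes distinct s_pos k_pos in auto)
  show ?thesis
    unfolding whole using reduced formula by (auto intro: prod.cong)
qed

end
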